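(* If a series $\sum u_n$ of fuzzy numbers converges to a fuzzy number $\nu$, then it is $E_p$ summable to $\nu$.
   Context: $E^1$ denotes the space of fuzzy numbers (normal, fuzzy convex, upper semi-continuous fuzzy sets on $\mathbb{R}$ with compact support), with addition and scalar multiplication defined levelwise on $\alpha$-level sets $[u]_\alpha=[u^-_\alpha,u^+_\alpha]$, and metric $D(u,v)=\sup_{\alpha\in[0,1]}\max\{|u^-_\alpha-v^-_\alpha|,|u^+_\alpha-v^+_\alpha|\}$. For a series $\sum u_n$ of fuzzy numbers let $s_n=\sum_{k=0}^n u_k$; the series converges to $\nu\in E^1$ if $D(s_n,\nu)\to 0$. For $p>0$, a sequence $(s_n)$ of fuzzy numbers has Euler means $t^p_n=\frac{1}{(p+1)^n}\sum_{k=0}^n\binom{n}{k}p^{n-k}s_k$, and is $E_p$ summable to $\nu$ if $t^p_n\to\nu$ in $D$. A series $\sum u_n$ of fuzzy numbers is $E_p$ summable to $\nu$ if its sequence of partial sums $(s_n)$ is $E_p$ summable to $\nu$. *)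

theory Defs
  imports "HOL-Analysis.Analysis"
begin

type_synonym fuzzy = "real \<Rightarrow> real"

definition usc :: "fuzzy \<Rightarrow> bool" where
  "usc u \<longleftrightarrow> (\<forall>x. \<forall>e>0. \<exists>d>0. \<forall>y. \<bar>y - x\<bar> < d \<longrightarrow> u y < u x + e)"

definition fuzzy_number :: "fuzzy \<Rightarrow> bool" where
  "fuzzy_number u \<longleftrightarrow>
     (\<forall>x. 0 \<le> u x \<and> u x \<le> 1) \<and>
     (\<exists>x. u x = 1) \<and>
     (\<forall>x y l. 0 \<le> l \<and> l \<le> 1 \<longrightarrow> min (u x) (u y) \<le> u (l * x + (1 - l) * y)) \<and>
     usc u \<and>
     compact (closure {x. 0 < u x})"

definition level :: "fuzzy \<Rightarrow> real \<Rightarrow> real set" where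
  "level u a = (if 0 < a then {x. a \<le> u x} else closure {x. 0 < u x})"

definition lower :: "fuzzy \<Rightarrow> real \<Rightarrow> real" where
  "lower u a = Inf (level u a)"

definition upper :: "fuzzy \<Rightarrow> real \<Rightarrow> real" where
  "upper u a = Sup (level u a)"

text \<open>Levelwise addition: the fuzzy set whose alpha-levels are [u]_alpha + [v]_alpha.\<close>
definition fadd :: "fuzzy \<Rightarrow> fuzzy \<Rightarrow> fuzzy" (infixl "\<oplus>" 65) where
  "u \<oplus> v = (\<lambda>z. Sup ({0} \<union> {a \<in> {0<..1}. z \<in> {x + y | x y. x \<in> level u a \<and> y \<in> level v a}}))"

text \<open>Levelwise scalar multiplication: alpha-levels c [u]_alpha.\<close>
definition fscale :: "real \<Rightarrow> fuzzy \<Rightarrow> fuzzy" (infixr "\<odot>" 70) where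
  "c \<odot> u = (\<lambda>z. Sup ({0} \<union> {a \<in> {0<..1}. z \<in> (\<lambda>x. c * x) ` level u a}))"

definition fdist :: "fuzzy \<Rightarrow> fuzzy \<Rightarrow> real" where
  "fdist u v = Sup ((\<lambda>a. max \<bar>lower u a - lower v a\<bar> \<bar>upper u a - upper v a\<bar>) ` {0..1})"

fun fsum :: "(nat \<Rightarrow> fuzzy) \<Rightarrow> nat \<Rightarrow> fuzzy" where
  "fsum f 0 = f 0"
| "fsum f (Suc n) = fsum f n \<oplus> f (Suc n)"

definition partial_sums :: "(nat \<Rightarrow> fuzzy) \<Rightarrow> nat \<Rightarrow> fuzzy" where
  "partial_sums u n = fsum u n"

definition euler_mean :: "real \<Rightarrow> (nat \<Rightarrow> fuzzy) \<Rightarrow> nat \<Rightarrow> fuzzy" where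
  "euler_mean p s n = (1 / (p + 1) ^ n) \<odot> fsum (\<lambda>k. (real (n choose k) * p ^ (n - k)) \<odot> s k) n"

definition fconverges :: "(nat \<Rightarrow> fuzzy) \<Rightarrow> fuzzy \<Rightarrow> bool" where
  "fconverges s v \<longleftrightarrow> (\<lambda>n. fdist (s n) v) \<longlonglongrightarrow> 0"

definition series_converges :: "(nat \<Rightarrow> fuzzy) \<Rightarrow> fuzzy \<Rightarrow> bool" where
  "series_converges u v \<longleftrightarrow> fconverges (partial_sums u) v"

definition euler_summable_series :: "real \<Rightarrow> (nat \<Rightarrow> fuzzy) \<Rightarrow> fuzzy \<Rightarrow> bool" where
  "euler_summable_series p u v \<longleftrightarrow> fconverges (euler_mean p (partial_sums u)) v"

end

theory Submission
  imports Defs "HOL-Real_Asymp.Real_Asymp"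
begin

text \<open>The Euler method is regular: \<open>t\<^sub>n\<close> is the convex combination of \<open>s\<^sub>0, \<dots>, s\<^sub>n\<close> with
  weights \<open>w\<^sub>n\<^sub>k = (n choose k) p\<^sup>n\<^sup>-\<^sup>k / (p+1)\<^sup>n\<close>, and each weight tends to \<open>0\<close> as \<open>n \<rightarrow> \<infinity>\<close>.
  Addition and positive scaling act on the endpoint functions \<open>\<alpha> \<mapsto> u\<^sup>-\<^sub>\<alpha>, u\<^sup>+\<^sub>\<alpha>\<close> by addition
  and scaling, so the endpoints of \<open>t\<^sub>n\<close> are the same convex combinations of the endpoints of the
  \<open>s\<^sub>k\<close>. Hence \<open>D(t\<^sub>n, \<nu>) \<le> \<Sum>\<^sub>k w\<^sub>n\<^sub>k D(s\<^sub>k, \<nu>)\<close>, and the right-hand side tends to \<open>0\<close> by the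
  Silverman--Toeplitz argument.\<close>

section \<open>Fuzzy sets described by endpoint functions\<close>

text \<open>Left continuity in \<open>\<alpha>\<close> is what makes the \<open>\<alpha>\<close>-levels of the levelwise operations
  \<open>\<oplus>\<close> and \<open>\<odot>\<close>, which are defined through a supremum of membership degrees, closed.\<close>
definition level_endpoints :: "(real \<Rightarrow> real) \<Rightarrow> (real \<Rightarrow> real) \<Rightarrow> bool" where
  "level_endpoints F G \<longleftrightarrow>
     (\<forall>a\<in>{0<..1}. F a \<le> G a) \<and>
     (\<forall>a b. 0 < a \<longrightarrow> a \<le> b \<longrightarrow> b \<le> 1 \<longrightarrow> F a \<le> F b \<and> G b \<le> G a) \<and>
     (\<exists>B. \<forall>a\<in>{0<..1}. -B \<le> F a \<and> G a \<le> B) \<and>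
     (\<forall>a\<in>{0<..1}. \<forall>e>0. \<exists>b. 0 < b \<and> b < a \<and> F a < F b + e \<and> G b < G a + e)"

definition has_levels :: "fuzzy \<Rightarrow> (real \<Rightarrow> real) \<Rightarrow> (real \<Rightarrow> real) \<Rightarrow> bool" where
  "has_levels w F G \<longleftrightarrow> level_endpoints F G \<and> (\<forall>a\<in>{0<..1}. level w a = {F a..G a})"

lemma level_endpointsD:
  assumes "level_endpoints F G"
  shows "\<And>a. a \<in> {0<..1} \<Longrightarrow> F a \<le> G a"
    and "\<And>a b. 0 < a \<Longrightarrow> a \<le> b \<Longrightarrow> b \<le> 1 \<Longrightarrow> F a \<le> F b \<and> G b \<le> G a"
    and "\<exists>B. \<forall>a\<in>{0<..1}. -B \<le> F a \<and> G a \<le> B"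
    and "\<And>a e. a \<in> {0<..1} \<Longrightarrow> e > 0 \<Longrightarrow> \<exists>b. 0 < b \<and> b < a \<and> F a < F b + e \<and> G b < G a + e"
  using assms unfolding level_endpoints_def by blast+

lemma level_endpoints_bounded:
  assumes "level_endpoints F G"
  obtains B where "\<And>a. a \<in> {0<..1} \<Longrightarrow> \<bar>F a\<bar> \<le> B \<and> \<bar>G a\<bar> \<le> B"
proof -
  obtain B where "\<And>a. a \<in> {0<..1} \<Longrightarrow> -B \<le> F a \<and> G a \<le> B"
    using level_endpointsD(3)[OF assms] by blast
  with level_endpointsD(1)[OF assms] show ?thesis
    by (intro that[of B]) fastforce
qed

lemma level_of_sup_membership:
  assumes Q: "level_endpoints F G"
    and w: "\<And>z. w z = Sup ({0} \<union> {b\<in>{0<..1}. F b \<le> z \<and> z \<le> G b})"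
    and a: "0 < a" "a \<le> 1"
  shows "level w a = {F a..G a}"
proof -
  define S where "S z = {0} \<union> {b\<in>{0<..1}. F b \<le> z \<and> z \<le> G b}" for z
  have bdd: "bdd_above (S z)" for z unfolding S_def by (rule bdd_aboveI[of _ 1]) auto
  have ne: "S z \<noteq> {}" for z unfolding S_def by auto
  note mono = level_endpointsD(2)[OF Q] and lc = level_endpointsD(4)[OF Q]
  have "z \<in> {F a..G a} \<longleftrightarrow> a \<le> Sup (S z)" for z
  proof
    assume "z \<in> {F a..G a}"
    then have "a \<in> S z" using a unfolding S_def by auto
    then show "a \<le> Sup (S z)" using bdd by (rule cSup_upper)
  next
    assume sup: "a \<le> Sup (S z)"
    have near: "\<exists>x\<in>{0<..1}. b < x \<and> F x \<le> z \<and> z \<le> G x" if "0 < b" "b < a" for b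
    proof -
      have "b < Sup (S z)" using that sup by linarith
      then obtain x where "x \<in> S z" "b < x" using less_cSupE[OF _ ne] by blast
      then show ?thesis using that unfolding S_def by auto
    qed
    have "F a \<le> z"
    proof (rule ccontr)
      assume "\<not> F a \<le> z"
      then obtain b where b: "0 < b" "b < a" "F a < F b + (F a - z)"
        using lc[of a "F a - z"] a by auto
      then obtain x where "x \<in> {0<..1}" "b < x" "F x \<le> z" using near by blast
      then show False using mono[of b x] b by auto
    qed
    moreover have "z \<le> G a"
    proof (rule ccontr)
      assume "\<not> z \<le> G a"
      then obtain b where b: "0 < b" "b < a" "G b < G a + (z - G a)"
        using lc[of a "z - G a"] a by auto
      then obtain x where "x \<in> {0<..1}" "b < x" "z \<le> G x" using near by blast
      then show False using mono[of b x] b by auto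
    qed
    ultimately show "z \<in> {F a..G a}" by auto
  qed
  moreover have "level w a = {z. a \<le> Sup (S z)}" using a unfolding level_def S_def w by simp
  ultimately show ?thesis by blast
qed

lemma cInf_closure_real:
  fixes S :: "real set" assumes "S \<noteq> {}" "bdd_below S"
  shows "Inf (closure S) = Inf S"
proof (rule antisym)
  have sub: "closure S \<subseteq> {Inf S..}"
    by (rule closure_minimal) (use assms cInf_lower in auto)
  then have "bdd_below (closure S)" by (auto intro: bdd_belowI)
  with closure_contains_Inf[OF assms] show "Inf (closure S) \<le> Inf S" by (rule cInf_lower)
  show "Inf S \<le> Inf (closure S)"
    using sub assms(1) closure_subset by (intro cInf_greatest) auto
qed

lemma cSup_closure_real:
  fixes S :: "real set" assumes "S \<noteq> {}" "bdd_above S"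
  shows "Sup (closure S) = Sup S"
proof (rule antisym)
  have sub: "closure S \<subseteq> {..Sup S}"
    by (rule closure_minimal) (use assms cSup_upper in auto)
  then have "bdd_above (closure S)" by (auto intro: bdd_aboveI)
  with closure_contains_Sup[OF assms] show "Sup S \<le> Sup (closure S)" by (rule cSup_upper)
  show "Sup (closure S) \<le> Sup S"
    using sub assms(1) closure_subset by (intro cSup_least) auto
qed

lemma has_levels_lower_upper:
  assumes "has_levels w F G" "a \<in> {0<..1}"
  shows "lower w a = F a" "upper w a = G a"
  using assms level_endpointsD(1) unfolding has_levels_def lower_def upper_def by auto

text \<open>At \<open>\<alpha> = 0\<close> the level is the closure of the support, the union of all positive levels.\<close>
lemma has_levels_lower_upper_zero:
  assumes g: "has_levels w F G"
  shows "lower w 0 = Inf (F ` {0<..1})" "upper w 0 = Sup (G ` {0<..1})"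
proof -
  have Q: "level_endpoints F G" and lv: "\<And>a. a \<in> {0<..1} \<Longrightarrow> level w a = {F a..G a}"
    using g unfolding has_levels_def by auto
  note FG = level_endpointsD(1)[OF Q]
  obtain B where B: "\<And>a. a \<in> {0<..1} \<Longrightarrow> -B \<le> F a \<and> G a \<le> B"
    using level_endpointsD(3)[OF Q] by blast
  define U where "U = {x. 0 < w x}"
  have U: "U = (\<Union>a\<in>{0<..1}. {F a..G a})"
  proof -
    have "x \<in> U \<longleftrightarrow> (\<exists>a\<in>{0<..1}. a \<le> w x)" for x
    proof
      assume "x \<in> U" then show "\<exists>a\<in>{0<..1}. a \<le> w x"
        unfolding U_def by (intro bexI[of _ "min (w x) 1"]) auto
    qed (auto simp: U_def)
    moreover have "a \<le> w x \<longleftrightarrow> x \<in> {F a..G a}" if "a \<in> {0<..1}" for a x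
      using lv[OF that] that by (auto simp: level_def set_eq_iff)
    ultimately show ?thesis by blast
  qed
  have ne: "U \<noteq> {}" using U FG[of 1] by auto
  have bU: "bdd_below U" "bdd_above U" using U B
    by (auto intro!: bdd_belowI[of _ "-B"] bdd_aboveI[of _ B]; force)+
  have bF: "bdd_below (F ` {0<..1})" using B by (auto intro!: bdd_belowI[of _ "-B"])
  have bG: "bdd_above (G ` {0<..1})" using B by (auto intro!: bdd_aboveI[of _ B])
  have "lower w 0 = Inf U" "upper w 0 = Sup U"
    unfolding lower_def upper_def level_def U_def[symmetric]
    using cInf_closure_real[OF ne bU(1)] cSup_closure_real[OF ne bU(2)] by auto
  moreover have "Inf U = Inf (F ` {0<..1})"
  proof (rule antisym)
    show "Inf U \<le> Inf (F ` {0<..1})"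
      by (rule cInf_greatest) (use U FG bU in \<open>auto intro!: cInf_lower\<close>)
    show "Inf (F ` {0<..1}) \<le> Inf U"
    proof (rule cInf_greatest[OF ne])
      fix x assume "x \<in> U"
      then obtain a where a: "a \<in> {0<..1}" "F a \<le> x" using U by auto
      then have "Inf (F ` {0<..1}) \<le> F a" using bF by (intro cInf_lower) auto
      with a show "Inf (F ` {0<..1}) \<le> x" by linarith
    qed
  qed
  moreover have "Sup U = Sup (G ` {0<..1})"
  proof (rule antisym)
    show "Sup (G ` {0<..1}) \<le> Sup U"
      by (rule cSup_least) (use U FG bU in \<open>auto intro!: cSup_upper\<close>)
    show "Sup U \<le> Sup (G ` {0<..1})"
    proof (rule cSup_least[OF ne])
      fix x assume "x \<in> U"
      then obtain a where a: "a \<in> {0<..1}" "x \<le> G a" using U by auto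
      then have "G a \<le> Sup (G ` {0<..1})" using bG by (intro cSup_upper) auto
      with a show "x \<le> Sup (G ` {0<..1})" by linarith
    qed
  qed
  ultimately show "lower w 0 = Inf (F ` {0<..1})" "upper w 0 = Sup (G ` {0<..1})" by auto
qed

section \<open>Levelwise operations\<close>

lemma level_endpoints_add:
  assumes "level_endpoints F G" "level_endpoints F' G'"
  shows "level_endpoints (\<lambda>a. F a + F' a) (\<lambda>a. G a + G' a)"
proof -
  note le1 = level_endpointsD(1)[OF assms(1)] and le2 = level_endpointsD(1)[OF assms(2)]
    and m1 = level_endpointsD(2)[OF assms(1)] and m2 = level_endpointsD(2)[OF assms(2)]
    and l1 = level_endpointsD(4)[OF assms(1)] and l2 = level_endpointsD(4)[OF assms(2)]
  obtain B B' where B: "\<And>a. a \<in> {0<..1} \<Longrightarrow> -B \<le> F a \<and> G a \<le> B"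
    and B': "\<And>a. a \<in> {0<..1} \<Longrightarrow> -B' \<le> F' a \<and> G' a \<le> B'"
    using level_endpointsD(3)[OF assms(1)] level_endpointsD(3)[OF assms(2)] by blast
  have lc: "\<exists>b. 0 < b \<and> b < a \<and> F a + F' a < F b + F' b + e \<and> G b + G' b < G a + G' a + e"
    if a: "a \<in> {0<..1}" and e: "e > 0" for a e
  proof -
    obtain b1 where b1: "0 < b1" "b1 < a" "F a < F b1 + e/2" "G b1 < G a + e/2"
      using l1[OF a, of "e/2"] e by auto
    obtain b2 where b2: "0 < b2" "b2 < a" "F' a < F' b2 + e/2" "G' b2 < G' a + e/2"
      using l2[OF a, of "e/2"] e by auto
    have "F b1 \<le> F (max b1 b2)" "G (max b1 b2) \<le> G b1"
      "F' b2 \<le> F' (max b1 b2)" "G' (max b1 b2) \<le> G' b2"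
      using m1[of b1 "max b1 b2"] m2[of b2 "max b1 b2"] b1 b2 a by auto
    with b1 b2 show ?thesis by (intro exI[of _ "max b1 b2"]) auto
  qed
  show ?thesis unfolding level_endpoints_def
  proof (intro conjI)
    show "\<exists>B. \<forall>a\<in>{0<..1}. - B \<le> F a + F' a \<and> G a + G' a \<le> B"
      using B B' by (intro exI[of _ "B + B'"]) (smt (verit))
  qed (use le1 le2 m1 m2 lc in \<open>auto intro: add_mono\<close>)
qed

lemma level_endpoints_scale:
  assumes "level_endpoints F G" "0 < c"
  shows "level_endpoints (\<lambda>a. c * F a) (\<lambda>a. c * G a)"
proof -
  note le = level_endpointsD(1)[OF assms(1)] and m = level_endpointsD(2)[OF assms(1)]
    and l = level_endpointsD(4)[OF assms(1)]
  obtain B where B: "\<And>a. a \<in> {0<..1} \<Longrightarrow> -B \<le> F a \<and> G a \<le> B"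
    using level_endpointsD(3)[OF assms(1)] by blast
  have lc: "\<exists>b. 0 < b \<and> b < a \<and> c * F a < c * F b + e \<and> c * G b < c * G a + e"
    if a: "a \<in> {0<..1}" and e: "e > 0" for a e
  proof -
    obtain b where b: "0 < b" "b < a" "F a < F b + e/c" "G b < G a + e/c"
      using l[OF a, of "e/c"] e assms(2) by auto
    then have "c * F a < c * F b + e" "c * G b < c * G a + e"
      using assms(2) by (simp_all add: field_simps)
    with b show ?thesis by auto
  qed
  show ?thesis unfolding level_endpoints_def
  proof (intro conjI)
    show "\<exists>B'. \<forall>a\<in>{0<..1}. - B' \<le> c * F a \<and> c * G a \<le> B'"
    proof (intro exI[of _ "c * B"] ballI conjI)
      fix a :: real assume "a \<in> {0<..1}"
      then show "- (c * B) \<le> c * F a" "c * G a \<le> c * B"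
        using B assms(2) mult_left_mono[of "-B" "F a" c] mult_left_mono[of "G a" B c] by auto
    qed
  qed (use le m lc assms(2) in \<open>auto simp: mult_left_mono\<close>)
qed

lemma interval_sums:
  fixes a b c d :: real assumes "a \<le> b" "c \<le> d"
  shows "{x + y | x y. x \<in> {a..b} \<and> y \<in> {c..d}} = {a + c..b + d}"
proof
  show "{a + c..b + d} \<subseteq> {x + y | x y. x \<in> {a..b} \<and> y \<in> {c..d}}"
  proof
    fix z assume z: "z \<in> {a + c..b + d}"
    define x where "x = max a (z - d)"
    have "x \<in> {a..b}" "z - x \<in> {c..d}" using z assms unfolding x_def by auto
    then show "z \<in> {x + y | x y. x \<in> {a..b} \<and> y \<in> {c..d}}" by force
  qed
qed auto

lemma has_levels_fadd:
  assumes u: "has_levels u F G" and v: "has_levels v F' G'"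
  shows "has_levels (u \<oplus> v) (\<lambda>a. F a + F' a) (\<lambda>a. G a + G' a)"
proof -
  have Q: "level_endpoints F G" "level_endpoints F' G'" using u v unfolding has_levels_def by auto
  have "(u \<oplus> v) z = Sup ({0} \<union> {b\<in>{0<..1}. F b + F' b \<le> z \<and> z \<le> G b + G' b})" for z
  proof -
    have "z \<in> {x + y | x y. x \<in> level u b \<and> y \<in> level v b} \<longleftrightarrow> F b + F' b \<le> z \<and> z \<le> G b + G' b"
      if "b \<in> {0<..1}" for b
      using u v that level_endpointsD(1)[OF Q(1) that] level_endpointsD(1)[OF Q(2) that]
        interval_sums[of "F b" "G b" "F' b" "G' b"]
      unfolding has_levels_def by simp
    then show ?thesis unfolding fadd_def by (metis (lifting) mem_Collect_eq)
  qed
  with level_endpoints_add[OF Q] show ?thesis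
    unfolding has_levels_def using level_of_sup_membership by auto
qed

lemma has_levels_fscale:
  assumes u: "has_levels u F G" and c: "0 < c"
  shows "has_levels (c \<odot> u) (\<lambda>a. c * F a) (\<lambda>a. c * G a)"
proof -
  have Q: "level_endpoints F G" using u unfolding has_levels_def by auto
  have "(c \<odot> u) z = Sup ({0} \<union> {b\<in>{0<..1}. c * F b \<le> z \<and> z \<le> c * G b})" for z
  proof -
    have "z \<in> (\<lambda>x. c * x) ` level u b \<longleftrightarrow> c * F b \<le> z \<and> z \<le> c * G b" if "b \<in> {0<..1}" for b
      using u that image_mult_atLeastAtMost[OF c, of "F b" "G b"] unfolding has_levels_def by simp
    then show ?thesis unfolding fscale_def by (metis (lifting) mem_Collect_eq)
  qed
  with level_endpoints_scale[OF Q c] show ?thesis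
    unfolding has_levels_def using level_of_sup_membership by auto
qed

lemma has_levels_fsum:
  assumes "\<And>k. k \<le> n \<Longrightarrow> has_levels (f k) (F k) (G k)"
  shows "has_levels (fsum f n) (\<lambda>a. \<Sum>k\<le>n. F k a) (\<lambda>a. \<Sum>k\<le>n. G k a)"
  using assms
proof (induction n)
  case (Suc n)
  then show ?case using has_levels_fadd[OF Suc.IH Suc.prems] by simp
qed simp

lemma fuzzy_number_level:
  assumes fn: "fuzzy_number u" and a: "0 < a" "a \<le> 1"
  shows "level u a = {lower u a..upper u a}" "lower u a \<le> upper u a"
    "lower u a \<in> closure {x. 0 < u x}" "upper u a \<in> closure {x. 0 < u x}"
proof -
  define L where "L = {x. a \<le> u x}"
  have lv: "level u a = L" unfolding level_def L_def using a by auto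
  obtain x0 where "u x0 = 1" using fn unfolding fuzzy_number_def by auto
  then have "x0 \<in> L" using a unfolding L_def by simp
  then have ne: "L \<noteq> {}" by auto
  have sub: "L \<subseteq> closure {x. 0 < u x}" unfolding L_def using a closure_subset by force
  have "bounded (closure {x. 0 < u x})"
    using fn unfolding fuzzy_number_def by (simp add: compact_imp_bounded)
  then have "bounded L" using sub bounded_subset by blast
  then have bb: "bdd_below L" "bdd_above L"
    by (auto simp: bounded_imp_bdd_below bounded_imp_bdd_above)
  have "open {x. u x < a}"
    unfolding open_dist
  proof (intro ballI)
    fix x assume "x \<in> {x. u x < a}"
    then have "0 < a - u x" by simp
    moreover have "usc u" using fn unfolding fuzzy_number_def by auto
    ultimately obtain d where "d > 0" "\<And>y. \<bar>y - x\<bar> < d \<Longrightarrow> u y < u x + (a - u x)"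
      unfolding usc_def by blast
    then show "\<exists>e>0. \<forall>y. dist y x < e \<longrightarrow> y \<in> {x. u x < a}"
      by (intro exI[of _ d]) (auto simp: dist_real_def)
  qed
  moreover have "L = - {x. u x < a}" unfolding L_def by auto
  ultimately have cl: "closed L" by (simp add: closed_def)
  have "convex L" unfolding convex_def
  proof (intro ballI allI impI)
    fix x y and s t :: real assume xy: "x \<in> L" "y \<in> L" and st: "0 \<le> s" "0 \<le> t" "s + t = 1"
    have "min (u x) (u y) \<le> u (s * x + (1 - s) * y)"
      using fn st unfolding fuzzy_number_def by auto
    moreover have "t = 1 - s" using st by auto
    ultimately show "s *\<^sub>R x + t *\<^sub>R y \<in> L" using xy unfolding L_def by auto
  qed
  then have iv: "is_interval L" by (simp add: is_interval_convex_1)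
  have I: "Inf L \<in> L" "Sup L \<in> L"
    using closed_contains_Inf[OF ne bb(1) cl] closed_contains_Sup[OF ne bb(2) cl] by auto
  have "L = {Inf L..Sup L}"
  proof
    show "L \<subseteq> {Inf L..Sup L}" using bb by (auto intro: cInf_lower cSup_upper)
    have "\<forall>a\<in>L. \<forall>b\<in>L. \<forall>x. a \<le> x \<longrightarrow> x \<le> b \<longrightarrow> x \<in> L" using iv is_interval_1 by blast
    then show "{Inf L..Sup L} \<subseteq> L" using I by (meson atLeastAtMost_iff subsetI)
  qed
  then show "level u a = {lower u a..upper u a}" unfolding lower_def upper_def lv by simp
  show "lower u a \<le> upper u a" unfolding lower_def upper_def lv using I bb by (auto intro: cInf_lower)
  show "lower u a \<in> closure {x. 0 < u x}" "upper u a \<in> closure {x. 0 < u x}"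
    unfolding lower_def upper_def lv using I sub by auto
qed

text \<open>Left continuity: if \<open>u\<^sup>-\<^sub>\<alpha>\<close> jumped at \<open>\<alpha>\<close>, a point strictly below it would lie in every
  level \<open>\<beta> < \<alpha>\<close>, hence have membership \<open>\<ge> \<alpha>\<close>, hence lie in the \<open>\<alpha>\<close>-level after all.\<close>
lemma fuzzy_number_has_levels:
  assumes fn: "fuzzy_number u"
  shows "has_levels u (lower u) (upper u)"
proof -
  let ?L = "lower u" and ?R = "upper u"
  have lv: "\<And>a. a \<in> {0<..1} \<Longrightarrow> level u a = {?L a..?R a}"
   and le: "\<And>a. a \<in> {0<..1} \<Longrightarrow> ?L a \<le> ?R a" using fuzzy_number_level[OF fn] by auto
  have "bounded (closure {x. 0 < u x})"
    using fn unfolding fuzzy_number_def by (simp add: compact_imp_bounded)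
  then obtain B where B: "\<And>x. x \<in> closure {x. 0 < u x} \<Longrightarrow> \<bar>x\<bar> \<le> B"
    unfolding bounded_real by auto
  have bnd: "\<forall>a\<in>{0<..1}. -B \<le> ?L a \<and> ?R a \<le> B"
  proof
    fix a :: real assume "a \<in> {0<..1}"
    then have "\<bar>?L a\<bar> \<le> B" "\<bar>?R a\<bar> \<le> B" using B fuzzy_number_level(3,4)[OF fn] by auto
    then show "-B \<le> ?L a \<and> ?R a \<le> B" by auto
  qed
  have mono: "?L a \<le> ?L b \<and> ?R b \<le> ?R a" if ab: "0 < a" "a \<le> b" "b \<le> 1" for a b
  proof -
    have "level u b \<subseteq> level u a" using ab unfolding level_def by auto
    with lv[of a] lv[of b] le[of b] ab show ?thesis by auto
  qed
  have in_level: "x \<in> level u a"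
    if a: "a \<in> {0<..1}" and x: "\<And>b. 0 < b \<Longrightarrow> b < a \<Longrightarrow> x \<in> level u b" for a x
  proof -
    have "a \<le> u x"
      by (rule dense_le_bounded[of 0]) (use a x in \<open>auto simp: level_def\<close>)
    with a show ?thesis unfolding level_def by auto
  qed
  have lcL: "\<exists>b. 0 < b \<and> b < a \<and> ?L a < ?L b + e" if a: "a \<in> {0<..1}" and e: "e > 0" for a e
  proof (rule ccontr)
    assume "\<not> ?thesis"
    then have H: "\<And>b. 0 < b \<Longrightarrow> b < a \<Longrightarrow> ?L b \<le> ?L a - e" by force
    have "?L a - e \<in> level u b" if b: "0 < b" "b < a" for b
    proof -
      have "?R a \<le> ?R b" using mono[of b a] b a by auto
      then show ?thesis using H[OF b] lv[of b] le[OF a] b a e by auto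
    qed
    then have "?L a - e \<in> level u a" using in_level[OF a] by blast
    then show False using lv[OF a] e by auto
  qed
  have lcR: "\<exists>b. 0 < b \<and> b < a \<and> ?R b < ?R a + e" if a: "a \<in> {0<..1}" and e: "e > 0" for a e
  proof (rule ccontr)
    assume "\<not> ?thesis"
    then have H: "\<And>b. 0 < b \<Longrightarrow> b < a \<Longrightarrow> ?R a + e \<le> ?R b" by force
    have "?R a + e \<in> level u b" if b: "0 < b" "b < a" for b
    proof -
      have "?L b \<le> ?L a" using mono[of b a] b a by auto
      then show ?thesis using H[OF b] lv[of b] le[OF a] b a e by auto
    qed
    then have "?R a + e \<in> level u a" using in_level[OF a] by blast
    then show False using lv[OF a] e by auto
  qed
  have lc: "\<exists>b. 0 < b \<and> b < a \<and> ?L a < ?L b + e \<and> ?R b < ?R a + e"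
    if a: "a \<in> {0<..1}" and e: "e > 0" for a e
  proof -
    obtain b1 where b1: "0 < b1" "b1 < a" "?L a < ?L b1 + e" using lcL[OF a e] by auto
    obtain b2 where b2: "0 < b2" "b2 < a" "?R b2 < ?R a + e" using lcR[OF a e] by auto
    have "?L b1 \<le> ?L (max b1 b2)" "?R (max b1 b2) \<le> ?R b2"
      using mono[of b1 "max b1 b2"] mono[of b2 "max b1 b2"] b1 b2 a by auto
    with b1 b2 show ?thesis by (intro exI[of _ "max b1 b2"]) auto
  qed
  have "level_endpoints ?L ?R" unfolding level_endpoints_def using le mono bnd lc by blast
  with lv show ?thesis unfolding has_levels_def by blast
qed

section \<open>The metric \<open>D\<close> in terms of endpoint functions\<close>

lemma cInf_image_dist_le:
  fixes f g :: "'a \<Rightarrow> real"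
  assumes "A \<noteq> {}" "bdd_below (f ` A)" "bdd_below (g ` A)" "\<And>a. a \<in> A \<Longrightarrow> \<bar>f a - g a\<bar> \<le> M"
  shows "\<bar>Inf (f ` A) - Inf (g ` A)\<bar> \<le> M"
proof -
  have "Inf (f ` A) - M \<le> Inf (g ` A)"
  proof (rule cInf_greatest)
    fix y assume "y \<in> g ` A" then obtain a where a: "a \<in> A" "y = g a" by auto
    have "Inf (f ` A) \<le> f a" using a assms(2) by (auto intro: cInf_lower)
    then show "Inf (f ` A) - M \<le> y" using assms(4)[OF a(1)] a by linarith
  qed (use assms in auto)
  moreover have "Inf (g ` A) - M \<le> Inf (f ` A)"
  proof (rule cInf_greatest)
    fix y assume "y \<in> f ` A" then obtain a where a: "a \<in> A" "y = f a" by auto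
    have "Inf (g ` A) \<le> g a" using a assms(3) by (auto intro: cInf_lower)
    then show "Inf (g ` A) - M \<le> y" using assms(4)[OF a(1)] a by linarith
  qed (use assms in auto)
  ultimately show ?thesis by linarith
qed

lemma cSup_image_dist_le:
  fixes f g :: "'a \<Rightarrow> real"
  assumes "A \<noteq> {}" "bdd_above (f ` A)" "bdd_above (g ` A)" "\<And>a. a \<in> A \<Longrightarrow> \<bar>f a - g a\<bar> \<le> M"
  shows "\<bar>Sup (f ` A) - Sup (g ` A)\<bar> \<le> M"
proof -
  have "Sup (f ` A) \<le> Sup (g ` A) + M"
  proof (rule cSup_least)
    fix y assume "y \<in> f ` A" then obtain a where a: "a \<in> A" "y = f a" by auto
    have "g a \<le> Sup (g ` A)" using a assms(3) by (auto intro: cSup_upper)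
    then show "y \<le> Sup (g ` A) + M" using assms(4)[OF a(1)] a by linarith
  qed (use assms in auto)
  moreover have "Sup (g ` A) \<le> Sup (f ` A) + M"
  proof (rule cSup_least)
    fix y assume "y \<in> g ` A" then obtain a where a: "a \<in> A" "y = g a" by auto
    have "f a \<le> Sup (f ` A)" using a assms(2) by (auto intro: cSup_upper)
    then show "y \<le> Sup (f ` A) + M" using assms(4)[OF a(1)] a by linarith
  qed (use assms in auto)
  ultimately show ?thesis by linarith
qed

lemma fdist_le:
  assumes g: "has_levels w F G" and g': "has_levels w' F' G'"
    and M: "\<And>a. a \<in> {0<..1} \<Longrightarrow> \<bar>F a - F' a\<bar> \<le> M \<and> \<bar>G a - G' a\<bar> \<le> M"
  shows "fdist w w' \<le> M"
  unfolding fdist_def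
proof (rule cSup_least)
  fix x assume "x \<in> (\<lambda>a. max \<bar>lower w a - lower w' a\<bar> \<bar>upper w a - upper w' a\<bar>) ` {0..1}"
  then obtain a where a: "a \<in> {0..1}" "x = max \<bar>lower w a - lower w' a\<bar> \<bar>upper w a - upper w' a\<bar>"
    by auto
  show "x \<le> M"
  proof (cases "a = 0")
    case True
    have Q: "level_endpoints F G" "level_endpoints F' G'" using g g' unfolding has_levels_def by auto
    obtain B B' where B: "\<And>a. a \<in> {0<..1} \<Longrightarrow> -B \<le> F a \<and> G a \<le> B"
      and B': "\<And>a. a \<in> {0<..1} \<Longrightarrow> -B' \<le> F' a \<and> G' a \<le> B'"
      using level_endpointsD(3)[OF Q(1)] level_endpointsD(3)[OF Q(2)] by blast
    have "\<bar>Inf (F ` {0<..1}) - Inf (F' ` {0<..1})\<bar> \<le> M"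
    proof (rule cInf_image_dist_le)
      show "bdd_below (F ` {0<..1})" using B by (auto intro!: bdd_belowI[of _ "-B"])
      show "bdd_below (F' ` {0<..1})" using B' by (auto intro!: bdd_belowI[of _ "-B'"])
    qed (use M in auto)
    moreover have "\<bar>Sup (G ` {0<..1}) - Sup (G' ` {0<..1})\<bar> \<le> M"
    proof (rule cSup_image_dist_le)
      show "bdd_above (G ` {0<..1})" using B by (auto intro!: bdd_aboveI[of _ B])
      show "bdd_above (G' ` {0<..1})" using B' by (auto intro!: bdd_aboveI[of _ B'])
    qed (use M in auto)
    ultimately show ?thesis
      using a True has_levels_lower_upper_zero[OF g] has_levels_lower_upper_zero[OF g'] by auto
  next
    case False
    with a M[of a] has_levels_lower_upper[OF g] has_levels_lower_upper[OF g'] show ?thesis by auto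
  qed
qed auto

lemma endpoint_dist_le_fdist:
  assumes g: "has_levels w F G" and g': "has_levels w' F' G'" and a: "a \<in> {0<..1}"
  shows "\<bar>F a - F' a\<bar> \<le> fdist w w'" "\<bar>G a - G' a\<bar> \<le> fdist w w'"
proof -
  obtain B B' where B: "\<And>a. a \<in> {0<..1} \<Longrightarrow> \<bar>F a\<bar> \<le> B \<and> \<bar>G a\<bar> \<le> B"
    and B': "\<And>a. a \<in> {0<..1} \<Longrightarrow> \<bar>F' a\<bar> \<le> B' \<and> \<bar>G' a\<bar> \<le> B'"
    using g g' level_endpoints_bounded unfolding has_levels_def by metis
  let ?h = "\<lambda>a. max \<bar>lower w a - lower w' a\<bar> \<bar>upper w a - upper w' a\<bar>"
  have "?h b \<le> max (?h 0) (B + B')" if b: "b \<in> {0..1}" for b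
  proof (cases "b = 0")
    case False
    with b have "b \<in> {0<..1}" by auto
    with B[OF this] B'[OF this] has_levels_lower_upper[OF g this] has_levels_lower_upper[OF g' this]
    have "?h b \<le> B + B'" by (simp add: abs_le_iff)
    then show ?thesis by (rule order_trans[OF _ max.cobounded2])
  qed simp
  then have "bdd_above (?h ` {0..1})" by (intro bdd_aboveI[of _ "max (?h 0) (B + B')"]) auto
  then have "?h a \<le> fdist w w'" unfolding fdist_def using a by (intro cSup_upper) auto
  then show "\<bar>F a - F' a\<bar> \<le> fdist w w'" "\<bar>G a - G' a\<bar> \<le> fdist w w'"
    using a has_levels_lower_upper[OF g] has_levels_lower_upper[OF g'] by auto
qed

lemma fdist_nonneg:
  assumes "has_levels w F G" "has_levels w' F' G'"
  shows "0 \<le> fdist w w'"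
proof -
  have "\<bar>F 1 - F' 1\<bar> \<le> fdist w w'" by (rule endpoint_dist_le_fdist(1)[OF assms]) simp
  then show ?thesis by (rule order_trans[OF abs_ge_zero])
qed

section \<open>Regularity of the Euler means\<close>

definition euler_weight :: "real \<Rightarrow> nat \<Rightarrow> nat \<Rightarrow> real" where
  "euler_weight p n k = real (n choose k) * p ^ (n - k) / (p + 1) ^ n"

lemma euler_weight_nonneg: "0 \<le> p \<Longrightarrow> 0 \<le> euler_weight p n k"
  unfolding euler_weight_def by simp

lemma euler_weight_sum:
  assumes "0 \<le> p"
  shows "(\<Sum>k\<le>n. euler_weight p n k) = 1"
proof -
  have "(\<Sum>k\<le>n. real (n choose k) * p ^ (n - k)) = (p + 1) ^ n"
    using binomial_ring[of 1 p n] by (simp add: add.commute)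
  moreover have "p + 1 \<noteq> 0" using assms by linarith
  ultimately show ?thesis unfolding euler_weight_def by (simp flip: sum_divide_distrib)
qed

lemma euler_weight_tendsto_zero:
  assumes p: "0 < p"
  shows "(\<lambda>n. euler_weight p n k) \<longlonglongrightarrow> 0"
proof -
  define q where "q = p / (p + 1)"
  have q: "0 < q" "q < 1" using p unfolding q_def by auto
  have "(\<lambda>n. real n ^ k * q ^ n) \<longlonglongrightarrow> 0" using q by real_asymp
  then have lim: "(\<lambda>n. real n ^ k * q ^ n / p ^ k) \<longlonglongrightarrow> 0" by (rule tendsto_divide_zero)
  show ?thesis
  proof (rule Lim_null_comparison[OF _ lim])
    show "\<forall>\<^sub>F n in sequentially. norm (euler_weight p n k) \<le> real n ^ k * q ^ n / p ^ k"
      using eventually_ge_at_top[of k]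
    proof eventually_elim
      case (elim n)
      have "euler_weight p n k = real (n choose k) * (q ^ n / p ^ k)"
        using elim p unfolding euler_weight_def q_def by (simp add: power_diff power_divide)
      moreover have "real (n choose k) \<le> real n ^ k"
        using binomial_le_pow[OF elim] by (metis of_nat_le_iff of_nat_power)
      then have "real (n choose k) * q ^ n / p ^ k \<le> real n ^ k * q ^ n / p ^ k"
        using q p by (intro divide_right_mono mult_right_mono) auto
      ultimately show ?case using p euler_weight_nonneg[of p n k] by simp
    qed
  qed
qed

text \<open>A special case of the Silverman--Toeplitz theorem.\<close>
lemma convex_weights_tendsto_zero:
  fixes w :: "nat \<Rightarrow> nat \<Rightarrow> real" and d :: "nat \<Rightarrow> real"
  assumes w0: "\<And>n k. 0 \<le> w n k" and w1: "\<And>n. (\<Sum>k\<le>n. w n k) = 1"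
    and wk: "\<And>k. (\<lambda>n. w n k) \<longlonglongrightarrow> 0"
    and d0: "\<And>k. 0 \<le> d k" and dl: "d \<longlonglongrightarrow> 0"
  shows "(\<lambda>n. \<Sum>k\<le>n. w n k * d k) \<longlonglongrightarrow> 0"
proof (rule LIMSEQ_I)
  fix r :: real assume r: "0 < r"
  obtain N where "\<forall>k\<ge>N. norm (d k - 0) < r/2"
    using LIMSEQ_D[OF dl, of "r/2"] r by auto
  then have N: "\<And>k. k \<ge> N \<Longrightarrow> d k < r/2" by auto
  have "(\<lambda>n. \<Sum>k<N. w n k * d k) \<longlonglongrightarrow> 0"
    by (intro tendsto_null_sum tendsto_mult_left_zero wk)
  then obtain N2 where N2: "\<And>n. n \<ge> N2 \<Longrightarrow> \<bar>\<Sum>k<N. w n k * d k\<bar> < r/2"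
    using LIMSEQ_D[of _ 0 "r/2"] r by fastforce
  have "norm ((\<Sum>k\<le>n. w n k * d k) - 0) < r" if n: "max N N2 \<le> n" for n
  proof -
    define g where "g k = (if k < N then d k else 0)" for k
    have "(\<Sum>k\<le>n. w n k * d k) \<le> (\<Sum>k\<le>n. w n k * (g k + r/2))"
    proof (intro sum_mono mult_left_mono w0)
      fix k show "d k \<le> g k + r/2"
        using N[of k] r by (cases "k < N") (auto simp: g_def)
    qed
    also have "\<dots> = (\<Sum>k\<le>n. w n k * g k) + r/2 * (\<Sum>k\<le>n. w n k)"
      by (simp add: distrib_left sum.distrib sum_distrib_left mult.commute)
    also have "\<dots> = (\<Sum>k\<le>n. w n k * g k) + r/2" by (simp add: w1)
    also have "(\<Sum>k\<le>n. w n k * g k) = (\<Sum>k<N. w n k * d k)"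
      using n by (subst sum.mono_neutral_right[of "{..n}" "{..<N}"]) (auto simp: g_def)
    finally have "(\<Sum>k\<le>n. w n k * d k) < r"
      using N2[of n] n by auto
    moreover have "0 \<le> (\<Sum>k\<le>n. w n k * d k)" using w0 d0 by (intro sum_nonneg) auto
    ultimately show ?thesis by simp
  qed
  then show "\<exists>no. \<forall>n\<ge>no. norm ((\<Sum>k\<le>n. w n k * d k) - 0) < r" by blast
qed

lemma convex_combination_dist_le:
  fixes w x d :: "nat \<Rightarrow> real"
  assumes "(\<Sum>k\<le>n. w k) = 1" "\<And>k. 0 \<le> w k" "\<And>k. k \<le> n \<Longrightarrow> \<bar>x k - y\<bar> \<le> d k"
  shows "\<bar>(\<Sum>k\<le>n. w k * x k) - y\<bar> \<le> (\<Sum>k\<le>n. w k * d k)"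
proof -
  have "(\<Sum>k\<le>n. w k * x k) - y = (\<Sum>k\<le>n. w k * (x k - y))"
    using assms(1) by (simp add: right_diff_distrib sum_subtractf flip: sum_distrib_right)
  also have "\<bar>\<dots>\<bar> \<le> (\<Sum>k\<le>n. \<bar>w k * (x k - y)\<bar>)" by (rule sum_abs)
  also have "\<dots> \<le> (\<Sum>k\<le>n. w k * d k)"
    using assms(2,3) by (intro sum_mono) (simp add: abs_mult mult_left_mono)
  finally show ?thesis .
qed

lemma has_levels_euler_mean:
  assumes p: "0 < p" and s: "\<And>k. k \<le> n \<Longrightarrow> has_levels (s k) (F k) (G k)"
  shows "has_levels (euler_mean p s n)
           (\<lambda>a. \<Sum>k\<le>n. euler_weight p n k * F k a) (\<lambda>a. \<Sum>k\<le>n. euler_weight p n k * G k a)"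
proof -
  let ?c = "\<lambda>k. real (n choose k) * p ^ (n - k)"
  have "has_levels (fsum (\<lambda>k. ?c k \<odot> s k) n) (\<lambda>a. \<Sum>k\<le>n. ?c k * F k a) (\<lambda>a. \<Sum>k\<le>n. ?c k * G k a)"
    using p s by (intro has_levels_fsum has_levels_fscale) auto
  from has_levels_fscale[OF this, of "1 / (p + 1) ^ n"] p show ?thesis
    unfolding euler_mean_def euler_weight_def by (simp add: sum_distrib_left)
qed

lemma fdist_euler_mean_le:
  assumes p: "0 < p" and s: "\<And>k. has_levels (s k) (F k) (G k)" and v: "has_levels v F' G'"
  shows "fdist (euler_mean p s n) v \<le> (\<Sum>k\<le>n. euler_weight p n k * fdist (s k) v)"
proof (rule fdist_le[OF has_levels_euler_mean[OF p s] v])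
  fix a :: real assume "a \<in> {0<..1}"
  note dist = endpoint_dist_le_fdist[OF s v this]
  show "\<bar>(\<Sum>k\<le>n. euler_weight p n k * F k a) - F' a\<bar> \<le> (\<Sum>k\<le>n. euler_weight p n k * fdist (s k) v) \<and>
        \<bar>(\<Sum>k\<le>n. euler_weight p n k * G k a) - G' a\<bar> \<le> (\<Sum>k\<le>n. euler_weight p n k * fdist (s k) v)"
    using p dist by (intro conjI convex_combination_dist_le euler_weight_sum euler_weight_nonneg) auto
qed

lemma euler_mean_fconverges:
  assumes p: "0 < p" and s: "\<And>k. has_levels (s k) (F k) (G k)" and v: "has_levels v F' G'"
    and lim: "fconverges s v"
  shows "fconverges (euler_mean p s) v"
proof -
  have "(\<lambda>n. \<Sum>k\<le>n. euler_weight p n k * fdist (s k) v) \<longlonglongrightarrow> 0"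
    using p lim fdist_nonneg[OF s v] unfolding fconverges_def
    by (intro convex_weights_tendsto_zero euler_weight_nonneg euler_weight_sum euler_weight_tendsto_zero)
      auto
  then show ?thesis
    unfolding fconverges_def
    by (rule tendsto_sandwich[rotated 2, OF tendsto_const])
      (use fdist_nonneg[OF has_levels_euler_mean[OF p s] v] fdist_euler_mean_le[OF p s v] in auto)
qed

theorem mainTheorem1:
  fixes u :: "nat \<Rightarrow> fuzzy" and \<nu> :: fuzzy and p :: real
  assumes "0 < p"
    and "\<And>n. fuzzy_number (u n)"
    and "fuzzy_number \<nu>"
    and "series_converges u \<nu>"
  shows "euler_summable_series p u \<nu>"
proof -
  have "has_levels (partial_sums u k) (\<lambda>a. \<Sum>j\<le>k. lower (u j) a) (\<lambda>a. \<Sum>j\<le>k. upper (u j) a)" for k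
    unfolding partial_sums_def using assms(2) by (intro has_levels_fsum fuzzy_number_has_levels)
  with assms(1,4) fuzzy_number_has_levels[OF assms(3)] show ?thesis
    unfolding euler_summable_series_def series_converges_def
    by (intro euler_mean_fconverges[where F = "\<lambda>k a. \<Sum>j\<le>k. lower (u j) a"
          and G = "\<lambda>k a. \<Sum>j\<le>k. upper (u j) a"])
qed

end
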